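(* In the privacy game, assume $\mathcal{Y}=\mathcal{X}$ and $\varrho\ge 0$. Let $\beta'\in B$ be given by $\beta'_{\hat x y}=1$ if $\hat x=y$ and $\beta'_{\hat x y}=0$ if $\hat x\neq y$, and let $\alpha'\in\arg\min_{\alpha\in A}[\xi(\alpha,\beta')+\varrho\zeta(\alpha)]$. Then $(\alpha',\beta')$ is a Nash equilibrium, i.e. $U(\alpha',\beta')\le U(\alpha,\beta')$ for all $\alpha\in A$ and $V(\alpha',\beta')\le V(\alpha',\beta)$ for all $\beta\in B$.
   Context: Privacy game. $\mathcal{X},\mathcal{W},\mathcal{Y}$ are finite nonempty sets; $p$ is a joint probability mass function of $(X,Z,W)$ on $\mathcal{X}\times\mathcal{X}\times\mathcal{W}$; $d:\mathcal{X}\times\mathcal{X}\to\mathbb{R}_{\ge 0}$; $\varrho$ is the privacy ratio. Sender policies: $A=\{\alpha=(\alpha_{yzw}):\alpha_{yzw}\in[0,1],\ \sum_{y\in\mathcal{Y}}\alpha_{yzw}=1\ \forall (z,w)\in\mathcal{X}\times\mathcal{W}\}$, with $\alpha_{yzw}=\mathbb{P}\{Y=y\mid Z=z,W=w\}$ ($Y$ conditionally independent of $X$ given $(Z,W)$). Receiver policies: $B=\{\beta=(\beta_{\hat x y}):\beta_{\hat x y}\in[0,1],\ \sum_{\hat x\in\mathcal{X}}\beta_{\hat x y}=1\ \forall y\in\mathcal{Y}\}$, with $\beta_{\hat x y}=\mathbb{P}\{\hat X=\hat x\mid Y=y\}$ ($\hat X$ conditionally independent of $(X,Z,W)$ given $Y$).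 Define $\xi(\alpha,\beta)=\mathbb{E}\{d(X,\hat X)\}=\sum_{x,\hat x\in\mathcal{X}}\sum_{y\in\mathcal{Y}}\sum_{z\in\mathcal{X}}\sum_{w\in\mathcal{W}}d(x,\hat x)\beta_{\hat x y}\alpha_{yzw}p(x,z,w)$ and $\zeta(\alpha)=I(Y;W)=\sum_{y,w}P_{yw}\log\frac{P_{yw}}{P_y P_w}$ (with $0\log 0=0$), where $P_{yw}=\sum_{z,x}\alpha_{yzw}p(x,z,w)$, $P_y=\sum_{w}P_{yw}$, $P_w=\sum_{z,x}p(x,z,w)$. Sender cost $U(\alpha,\beta)=\xi(\alpha,\beta)+\varrho\zeta(\alpha)$; receiver cost $V(\alpha,\beta)=\xi(\alpha,\beta)$. *)

theory Defs
  imports Complex_Main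
begin

text \<open>The finite nonempty sets \<open>\<X>\<close>, \<open>\<W>\<close> are the
  finite types \<open>'x\<close>, \<open>'w\<close>. Joint pmf \<open>p x z w\<close> of \<open>(X,Z,W)\<close>.
  Sender policy \<open>\<alpha> y z w = P{Y=y | Z=z, W=w}\<close>; receiver policy
  \<open>\<beta> xh y = P{Xhat = xh | Y = y}\<close>.\<close>

definition is_pmf3 :: "('x::finite \<Rightarrow> 'x \<Rightarrow> 'w::finite \<Rightarrow> real) \<Rightarrow> bool" where
  "is_pmf3 p \<longleftrightarrow> (\<forall>x z w. p x z w \<ge> 0) \<and> (\<Sum>x\<in>UNIV. \<Sum>z\<in>UNIV. \<Sum>w\<in>UNIV. p x z w) = 1"

definition sender_policies :: "('y::finite \<Rightarrow> 'x::finite \<Rightarrow> 'w::finite \<Rightarrow> real) set" where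
  "sender_policies = {\<alpha>. (\<forall>y z w. 0 \<le> \<alpha> y z w \<and> \<alpha> y z w \<le> 1) \<and>
                          (\<forall>z w. (\<Sum>y\<in>UNIV. \<alpha> y z w) = 1)}"

definition receiver_policies :: "('x::finite \<Rightarrow> 'y::finite \<Rightarrow> real) set" where
  "receiver_policies = {\<beta>. (\<forall>xh y. 0 \<le> \<beta> xh y \<and> \<beta> xh y \<le> 1) \<and>
                            (\<forall>y. (\<Sum>xh\<in>UNIV. \<beta> xh y) = 1)}"

definition xi :: "('x::finite \<Rightarrow> 'x \<Rightarrow> 'w::finite \<Rightarrow> real) \<Rightarrow> ('x \<Rightarrow> 'x \<Rightarrow> real)
    \<Rightarrow> ('y::finite \<Rightarrow> 'x \<Rightarrow> 'w \<Rightarrow> real) \<Rightarrow> ('x \<Rightarrow> 'y \<Rightarrow> real) \<Rightarrow> real" where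
  "xi p d \<alpha> \<beta> = (\<Sum>x\<in>UNIV. \<Sum>xh\<in>UNIV. \<Sum>y\<in>UNIV. \<Sum>z\<in>UNIV. \<Sum>w\<in>UNIV.
       d x xh * \<beta> xh y * \<alpha> y z w * p x z w)"

definition P_yw :: "('x::finite \<Rightarrow> 'x \<Rightarrow> 'w::finite \<Rightarrow> real) \<Rightarrow> ('y \<Rightarrow> 'x \<Rightarrow> 'w \<Rightarrow> real)
    \<Rightarrow> 'y \<Rightarrow> 'w \<Rightarrow> real" where
  "P_yw p \<alpha> y w = (\<Sum>z\<in>UNIV. \<Sum>x\<in>UNIV. \<alpha> y z w * p x z w)"

definition P_y :: "('x::finite \<Rightarrow> 'x \<Rightarrow> 'w::finite \<Rightarrow> real) \<Rightarrow> ('y \<Rightarrow> 'x \<Rightarrow> 'w \<Rightarrow> real)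
    \<Rightarrow> 'y \<Rightarrow> real" where
  "P_y p \<alpha> y = (\<Sum>w\<in>UNIV. P_yw p \<alpha> y w)"

definition P_w :: "('x::finite \<Rightarrow> 'x \<Rightarrow> 'w::finite \<Rightarrow> real) \<Rightarrow> 'w \<Rightarrow> real" where
  "P_w p w = (\<Sum>z\<in>UNIV. \<Sum>x\<in>UNIV. p x z w)"

text \<open>Mutual information \<open>I(Y;W)\<close> (natural logarithm), with \<open>0 log 0 = 0\<close>.\<close>
definition zeta :: "('x::finite \<Rightarrow> 'x \<Rightarrow> 'w::finite \<Rightarrow> real) \<Rightarrow> ('y::finite \<Rightarrow> 'x \<Rightarrow> 'w \<Rightarrow> real) \<Rightarrow> real" where
  "zeta p \<alpha> = (\<Sum>y\<in>UNIV. \<Sum>w\<in>UNIV.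
      (if P_yw p \<alpha> y w = 0 then 0
       else P_yw p \<alpha> y w * ln (P_yw p \<alpha> y w / (P_y p \<alpha> y * P_w p w))))"

definition sender_cost where
  "sender_cost p d rho \<alpha> \<beta> = xi p d \<alpha> \<beta> + rho * zeta p \<alpha>"

definition receiver_cost where
  "receiver_cost p d \<alpha> \<beta> = xi p d \<alpha> \<beta>"

end

theory Submission imports Defs begin

text \<open>Against the identity receiver, any sender policy can redirect the whole mass of a signal
  \<open>y\<close> onto another signal \<open>t\<close>. Merging two signals never increases \<open>I(Y;W)\<close> (a log-sum
  inequality) and changes the distortion by the difference between guessing \<open>t\<close> and guessing
  \<open>y\<close> on signal \<open>y\<close>. Hence, at an optimal sender policy, \<open>y\<close> is a cheapest guess for the
  signal \<open>y\<close>, i.e. the identity receiver is a best response.\<close>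

definition guess_cost :: "('x::finite \<Rightarrow> 'x \<Rightarrow> 'w::finite \<Rightarrow> real) \<Rightarrow> ('x \<Rightarrow> 'x \<Rightarrow> real)
    \<Rightarrow> ('y \<Rightarrow> 'x \<Rightarrow> 'w \<Rightarrow> real) \<Rightarrow> 'x \<Rightarrow> 'y \<Rightarrow> real" where
  "guess_cost p d \<alpha> xh y = (\<Sum>x\<in>UNIV. \<Sum>z\<in>UNIV. \<Sum>w\<in>UNIV. d x xh * \<alpha> y z w * p x z w)"

lemma xi_eq_sum_guess_cost:
  "xi p d \<alpha> \<beta> = (\<Sum>xh\<in>UNIV. \<Sum>y\<in>UNIV. \<beta> xh y * guess_cost p d \<alpha> xh y)"
proof -
  have "xi p d \<alpha> \<beta> = (\<Sum>xh\<in>UNIV. \<Sum>x\<in>UNIV. \<Sum>y\<in>UNIV. \<Sum>z\<in>UNIV. \<Sum>w\<in>UNIV.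
       d x xh * \<beta> xh y * \<alpha> y z w * p x z w)"
    unfolding xi_def by (rule sum.swap)
  also have "\<dots> = (\<Sum>xh\<in>UNIV. \<Sum>y\<in>UNIV. \<Sum>x\<in>UNIV. \<Sum>z\<in>UNIV. \<Sum>w\<in>UNIV.
       d x xh * \<beta> xh y * \<alpha> y z w * p x z w)"
    by (intro sum.cong refl sum.swap)
  also have "\<dots> = (\<Sum>xh\<in>UNIV. \<Sum>y\<in>UNIV. \<beta> xh y * guess_cost p d \<alpha> xh y)"
    unfolding guess_cost_def by (simp add: sum_distrib_left mult.assoc mult.left_commute)
  finally show ?thesis .
qed

lemma xi_identity_receiver:
  "xi p d \<alpha> (\<lambda>xh y. if xh = y then 1 else 0) = (\<Sum>y\<in>UNIV. guess_cost p d \<alpha> y y)"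
proof -
  have "(\<Sum>y\<in>UNIV. (if xh = y then 1 else 0) * guess_cost p d \<alpha> xh y) = guess_cost p d \<alpha> xh xh"
    for xh
    by (simp add: if_distrib if_distribR cong: if_cong)
  then show ?thesis unfolding xi_eq_sum_guess_cost by simp
qed

lemma identity_receiver_best_response:
  assumes "\<beta> \<in> receiver_policies" and cheapest: "\<And>xh y. guess_cost p d \<alpha> y y \<le> guess_cost p d \<alpha> xh y"
  shows "xi p d \<alpha> (\<lambda>xh y. if xh = y then 1 else 0) \<le> xi p d \<alpha> \<beta>"
proof -
  have \<beta>: "\<And>xh y. 0 \<le> \<beta> xh y" "\<And>y. (\<Sum>xh\<in>UNIV. \<beta> xh y) = 1"
    using assms(1) unfolding receiver_policies_def by auto
  have "xi p d \<alpha> (\<lambda>xh y. if xh = y then 1 else 0)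
      = (\<Sum>y\<in>UNIV. (\<Sum>xh\<in>UNIV. \<beta> xh y) * guess_cost p d \<alpha> y y)"
    by (simp add: xi_identity_receiver \<beta>(2))
  also have "\<dots> = (\<Sum>xh\<in>UNIV. \<Sum>y\<in>UNIV. \<beta> xh y * guess_cost p d \<alpha> y y)"
    by (simp add: sum_distrib_right) (rule sum.swap)
  also have "\<dots> \<le> (\<Sum>xh\<in>UNIV. \<Sum>y\<in>UNIV. \<beta> xh y * guess_cost p d \<alpha> xh y)"
    by (intro sum_mono mult_left_mono cheapest \<beta>(1))
  also have "\<dots> = xi p d \<alpha> \<beta>"
    by (simp add: xi_eq_sum_guess_cost)
  finally show ?thesis .
qed


definition rel_entr :: "real \<Rightarrow> real \<Rightarrow> real" where
  "rel_entr a u = (if a = 0 then 0 else a * ln (a / u))"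

lemma mult_ln_le_rel_entr:
  fixes a u s t :: real
  assumes "0 \<le> a" "0 \<le> u" "a \<le> s" "0 < t" "0 < a \<Longrightarrow> 0 < u"
  shows "a * ln (s / t) \<le> rel_entr a u + (s * u / t - a)"
proof (cases "a = 0")
  case True
  then show ?thesis using assms by (simp add: rel_entr_def)
next
  case False
  then have pos: "0 < a" "0 < u" "0 < s" using assms by auto
  have "a * ln (s / t) - a * ln (a / u) = a * ln (s * u / (t * a))"
    using pos assms by (simp add: ln_div ln_mult algebra_simps)
  also have "\<dots> \<le> a * (s * u / (t * a) - 1)"
    using pos assms by (intro mult_left_mono ln_le_minus_one) auto
  also have "\<dots> = s * u / t - a"
    using pos by (simp add: field_simps)
  finally show ?thesis using False by (simp add: rel_entr_def)
qed

lemma rel_entr_add_le: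
  fixes a b u v :: real
  assumes "0 \<le> a" "0 \<le> b" "0 \<le> u" "0 \<le> v" "0 < a \<Longrightarrow> 0 < u" "0 < b \<Longrightarrow> 0 < v"
  shows "rel_entr (a + b) (u + v) \<le> rel_entr a u + rel_entr b v"
proof (cases "a + b = 0")
  case True
  then show ?thesis using assms by (simp add: rel_entr_def)
next
  case False
  then have t: "0 < u + v" using assms by fastforce
  have "rel_entr (a + b) (u + v) = a * ln ((a + b) / (u + v)) + b * ln ((a + b) / (u + v))"
    using False by (simp add: rel_entr_def distrib_right)
  also have "\<dots> \<le> (rel_entr a u + ((a + b) * u / (u + v) - a))
      + (rel_entr b v + ((a + b) * v / (u + v) - b))"
    using assms t by (intro add_mono mult_ln_le_rel_entr) auto
  also have "\<dots> = rel_entr a u + rel_entr b v"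
  proof -
    have "(a + b) * u / (u + v) + (a + b) * v / (u + v) = a + b"
      using t by (simp add: add_divide_distrib[symmetric] distrib_left[symmetric])
    then show ?thesis by linarith
  qed
  finally show ?thesis .
qed


definition signal_info :: "('w::finite \<Rightarrow> real) \<Rightarrow> ('w \<Rightarrow> real) \<Rightarrow> real" where
  "signal_info r q = (\<Sum>w\<in>UNIV. rel_entr (q w) ((\<Sum>v\<in>UNIV. q v) * r w))"

lemma zeta_eq_sum_signal_info: "zeta p \<alpha> = (\<Sum>y\<in>UNIV. signal_info (P_w p) (P_yw p \<alpha> y))"
  unfolding zeta_def signal_info_def rel_entr_def P_y_def by simp

lemma signal_info_zero [simp]: "signal_info r (\<lambda>w. 0) = 0"
  by (simp add: signal_info_def rel_entr_def)

lemma signal_info_add_le: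
  assumes "\<And>w. 0 \<le> r w" "\<And>w. 0 \<le> a w" "\<And>w. 0 \<le> b w"
    and "\<And>w. 0 < a w \<Longrightarrow> 0 < r w" "\<And>w. 0 < b w \<Longrightarrow> 0 < r w"
  shows "signal_info r (\<lambda>w. a w + b w) \<le> signal_info r a + signal_info r b"
proof -
  define A B where "A = (\<Sum>v\<in>UNIV. a v)" and "B = (\<Sum>v\<in>UNIV. b v)"
  have le: "a w \<le> A" "b w \<le> B" for w
    unfolding A_def B_def using assms(2,3) by (auto intro: member_le_sum)
  then have "0 \<le> A" "0 \<le> B" using assms(2,3) order.trans by blast+
  with le have "rel_entr (a w + b w) (A * r w + B * r w) \<le> rel_entr (a w) (A * r w) + rel_entr (b w) (B * r w)"
    for w using assms[of w] by (intro rel_entr_add_le) (auto intro: mult_pos_pos less_le_trans)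
  moreover have "(\<Sum>v\<in>UNIV. a v + b v) = A + B"
    by (simp add: A_def B_def sum.distrib)
  ultimately have "signal_info r (\<lambda>w. a w + b w)
      \<le> (\<Sum>w\<in>UNIV. rel_entr (a w) (A * r w) + rel_entr (b w) (B * r w))"
    unfolding signal_info_def by (simp add: distrib_right sum_mono)
  also have "\<dots> = signal_info r a + signal_info r b"
    by (simp add: signal_info_def A_def B_def sum.distrib)
  finally show ?thesis .
qed

lemma P_yw_nonneg:
  assumes "is_pmf3 p" "\<alpha> \<in> sender_policies" shows "0 \<le> P_yw p \<alpha> y w"
  using assms unfolding P_yw_def is_pmf3_def sender_policies_def by (auto intro!: sum_nonneg)

lemma P_yw_le_P_w:
  assumes "is_pmf3 p" "\<alpha> \<in> sender_policies" shows "P_yw p \<alpha> y w \<le> P_w p w"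
  using assms unfolding P_yw_def P_w_def is_pmf3_def sender_policies_def
  by (auto intro!: sum_mono mult_left_le_one_le)


definition merge_signal :: "('y \<Rightarrow> 'z \<Rightarrow> 'w \<Rightarrow> real) \<Rightarrow> 'y \<Rightarrow> 'y \<Rightarrow> 'y \<Rightarrow> 'z \<Rightarrow> 'w \<Rightarrow> real" where
  "merge_signal \<alpha> y t =
     (\<lambda>y' z w. if y' = y then 0 else if y' = t then \<alpha> t z w + \<alpha> y z w else \<alpha> y' z w)"

lemma merge_signal_sender_policy:
  assumes "\<alpha> \<in> sender_policies" "t \<noteq> y"
  shows "merge_signal \<alpha> y t \<in> sender_policies"
proof -
  have \<alpha>: "\<And>y' z w. 0 \<le> \<alpha> y' z w" "\<And>z w. (\<Sum>y'\<in>UNIV. \<alpha> y' z w) = 1"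
    using assms(1) unfolding sender_policies_def by auto
  have sum_merge: "(\<Sum>y'\<in>UNIV. merge_signal \<alpha> y t y' z w) = (\<Sum>y'\<in>UNIV. \<alpha> y' z w)" for z w
  proof -
    have "merge_signal \<alpha> y t y' z w
        = \<alpha> y' z w + (if y' = t then \<alpha> y z w else 0) - (if y' = y then \<alpha> y z w else 0)" for y'
      using assms(2) by (simp add: merge_signal_def)
    then show ?thesis by (simp add: sum.distrib sum_subtractf)
  qed
  have "merge_signal \<alpha> y t y' z w \<le> (\<Sum>y'\<in>UNIV. merge_signal \<alpha> y t y' z w)" for y' z w
    by (rule member_le_sum) (auto simp: merge_signal_def \<alpha>(1) add_nonneg_nonneg)
  then show ?thesis
    unfolding sender_policies_def using \<alpha> sum_merge
    by (auto simp: merge_signal_def add_nonneg_nonneg)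
qed

lemma xi_merge_signal_identity:
  assumes "t \<noteq> y"
  shows "xi p d (merge_signal \<alpha> y t) (\<lambda>xh y. if xh = y then 1 else 0)
       = xi p d \<alpha> (\<lambda>xh y. if xh = y then 1 else 0) + guess_cost p d \<alpha> t y - guess_cost p d \<alpha> y y"
proof -
  have "guess_cost p d (merge_signal \<alpha> y t) y' y' = guess_cost p d \<alpha> y' y'
      + (if y' = t then guess_cost p d \<alpha> t y else 0) - (if y' = y then guess_cost p d \<alpha> y y else 0)"
    for y'
    using assms
    by (auto simp: guess_cost_def merge_signal_def distrib_left distrib_right sum.distrib)
  then show ?thesis
    by (simp add: xi_identity_receiver sum.distrib sum_subtractf)
qed

lemma zeta_merge_signal_le:
  assumes "is_pmf3 p" "\<alpha> \<in> sender_policies" "t \<noteq> y"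
  shows "zeta p (merge_signal \<alpha> y t) \<le> zeta p \<alpha>"
proof -
  let ?I = "\<lambda>y'. signal_info (P_w p) (P_yw p \<alpha> y')"
  have P_merge: "P_yw p (merge_signal \<alpha> y t) y' = (if y' = y then (\<lambda>w. 0)
      else if y' = t then (\<lambda>w. P_yw p \<alpha> t w + P_yw p \<alpha> y w) else P_yw p \<alpha> y')" for y'
    using assms(3) by (auto simp: P_yw_def merge_signal_def distrib_right sum.distrib)
  have merged: "signal_info (P_w p) (\<lambda>w. P_yw p \<alpha> t w + P_yw p \<alpha> y w) \<le> ?I t + ?I y"
    using P_yw_nonneg[OF assms(1,2)] P_yw_le_P_w[OF assms(1,2)]
    by (intro signal_info_add_le) (meson order.trans less_le_trans)+
  have "signal_info (P_w p) (P_yw p (merge_signal \<alpha> y t) y')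
      \<le> ?I y' + (if y' = t then ?I y else 0) - (if y' = y then ?I y else 0)" for y'
    using assms(3) merged by (auto simp: P_merge)
  then have "zeta p (merge_signal \<alpha> y t)
      \<le> (\<Sum>y'\<in>UNIV. ?I y' + (if y' = t then ?I y else 0) - (if y' = y then ?I y else 0))"
    unfolding zeta_eq_sum_signal_info by (rule sum_mono)
  also have "\<dots> = zeta p \<alpha>"
    by (simp add: zeta_eq_sum_signal_info sum.distrib sum_subtractf)
  finally show ?thesis .
qed

lemma optimal_sender_guess_signal_cheapest:
  assumes pmf: "is_pmf3 p" and "0 \<le> rho" and \<alpha>: "\<alpha> \<in> sender_policies"
    and opt: "\<forall>\<alpha>'\<in>sender_policies. xi p d \<alpha> (\<lambda>xh y. if xh = y then 1 else 0) + rho * zeta p \<alpha>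
                 \<le> xi p d \<alpha>' (\<lambda>xh y. if xh = y then 1 else 0) + rho * zeta p \<alpha>'"
  shows "guess_cost p d \<alpha> y y \<le> guess_cost p d \<alpha> t y"
proof (rule ccontr)
  assume "\<not> ?thesis"
  then have cheaper: "guess_cost p d \<alpha> t y < guess_cost p d \<alpha> y y" by simp
  then have "t \<noteq> y" by auto
  have "rho * zeta p (merge_signal \<alpha> y t) \<le> rho * zeta p \<alpha>"
    using zeta_merge_signal_le[OF pmf \<alpha> \<open>t \<noteq> y\<close>] \<open>0 \<le> rho\<close> by (rule mult_left_mono)
  then show False
    using opt merge_signal_sender_policy[OF \<alpha> \<open>t \<noteq> y\<close>] cheaper
      xi_merge_signal_identity[OF \<open>t \<noteq> y\<close>, of p d \<alpha>]
    by fastforce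
qed

theorem mainTheorem4:
  fixes p :: "'x::finite \<Rightarrow> 'x \<Rightarrow> 'w::finite \<Rightarrow> real"
    and d :: "'x \<Rightarrow> 'x \<Rightarrow> real"
    and rho :: real
    and \<alpha>' :: "'x \<Rightarrow> 'x \<Rightarrow> 'w \<Rightarrow> real"
    and \<beta>' :: "'x \<Rightarrow> 'x \<Rightarrow> real"
  assumes "is_pmf3 p"
    and "\<forall>x xh. d x xh \<ge> 0"
    and "rho \<ge> 0"
    and "\<beta>' = (\<lambda>xh y. if xh = y then 1 else 0)"
    and "\<alpha>' \<in> sender_policies"
    and "\<forall>\<alpha>\<in>sender_policies. xi p d \<alpha>' \<beta>' + rho * zeta p \<alpha>' \<le> xi p d \<alpha> \<beta>' + rho * zeta p \<alpha>"
  shows "\<beta>' \<in> receiver_policies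
         \<and> (\<forall>\<alpha>\<in>sender_policies. sender_cost p d rho \<alpha>' \<beta>' \<le> sender_cost p d rho \<alpha> \<beta>')
         \<and> (\<forall>\<beta>\<in>receiver_policies. receiver_cost p d \<alpha>' \<beta>' \<le> receiver_cost p d \<alpha>' \<beta>)"
proof (intro conjI ballI)
  show "\<beta>' \<in> receiver_policies" unfolding receiver_policies_def assms(4) by auto
next
  fix \<alpha> :: "'x \<Rightarrow> 'x \<Rightarrow> 'w \<Rightarrow> real" assume "\<alpha> \<in> sender_policies"
  then show "sender_cost p d rho \<alpha>' \<beta>' \<le> sender_cost p d rho \<alpha> \<beta>'"
    using assms(6) unfolding sender_cost_def by blast
next
  fix \<beta> :: "'x \<Rightarrow> 'x \<Rightarrow> real" assume "\<beta> \<in> receiver_policies"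
  moreover have "guess_cost p d \<alpha>' y y \<le> guess_cost p d \<alpha>' xh y" for xh y
    using optimal_sender_guess_signal_cheapest[OF assms(1,3,5)] assms(4,6) by blast
  ultimately show "receiver_cost p d \<alpha>' \<beta>' \<le> receiver_cost p d \<alpha>' \<beta>"
    unfolding receiver_cost_def assms(4) by (rule identity_receiver_best_response)
qed

end
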